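(* Let $D\ge1$ and consider the linear network $f_\theta(x)=W_D\cdots W_1x$ with $W_k\in\mathbb{R}^{d_{k+1}\times d_k}$, $d_1=d_x$, $d_{D+1}=d_y$, and loss $\ell(x,y,\theta)=\frac12\|y-W_D\cdots W_1x\|^2$, where $x$ has second-moment matrix $\Sigma_x=\mathbb{E}[xx^T]$. Let $T(\theta)=\mathrm{Tr}\,\mathbb{E}_{x,y}[\nabla_\theta^2\ell(x,y,\theta)]$. Suppose the entries of the weight matrices are independent, with entries of $W_k$ distributed as $\mathcal{N}(0,\sigma_k^2)$. Then the expected sharpness at initialization is $$\mathbb{E}[T(\theta)]=d_y\Big(\prod_{k=2}^Dd_k\Big)\mathrm{Tr}[\Sigma_x]\sum_{k=1}^D\prod_{j\ne k}\sigma_j^2,$$ where the expectation is over the random initialization. In particular, if $\sigma_k^2=\sigma^2$ and $d_k=d$ for all $k$, then $\mathbb{E}[T(\theta)]=D\,d_y\,\mathrm{Tr}[\Sigma_x](d\sigma^2)^{D-1}$.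
   Context: The product $\prod_{j\neq k}$ ranges over $j\in\{1,\dots,D\}\setminus\{k\}$. *)

theory Defs
  imports "HOL-Probability.Probability"
begin

text \<open>Parameters: theta k i j is the (i,j) entry of W_k (k = 1..D, i < d (k+1), j < d k).
  Dimensions: d :: nat => nat, with d_x = d 1 and d_y = d (D+1).\<close>

fun layer_out :: "(nat \<Rightarrow> nat) \<Rightarrow> (nat \<Rightarrow> nat \<Rightarrow> nat \<Rightarrow> real) \<Rightarrow> nat \<Rightarrow> (nat \<Rightarrow> real) \<Rightarrow> nat \<Rightarrow> real" where
  "layer_out d \<theta> 0 x = x"
| "layer_out d \<theta> (Suc k) x = (\<lambda>i. \<Sum>j<d (Suc k). \<theta> (Suc k) i j * layer_out d \<theta> k x j)"

definition net :: "(nat \<Rightarrow> nat) \<Rightarrow> nat \<Rightarrow> (nat \<Rightarrow> nat \<Rightarrow> nat \<Rightarrow> real) \<Rightarrow> (nat \<Rightarrow> real) \<Rightarrow> nat \<Rightarrow> real" where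
  "net d D \<theta> x = layer_out d \<theta> D x"

definition loss :: "(nat \<Rightarrow> nat) \<Rightarrow> nat \<Rightarrow> (nat \<Rightarrow> real) \<Rightarrow> (nat \<Rightarrow> real) \<Rightarrow> (nat \<Rightarrow> nat \<Rightarrow> nat \<Rightarrow> real) \<Rightarrow> real" where
  "loss d D x y \<theta> = 1/2 * (\<Sum>i<d (Suc D). (y i - net d D \<theta> x i)\<^sup>2)"

definition param_idx :: "(nat \<Rightarrow> nat) \<Rightarrow> nat \<Rightarrow> (nat \<times> nat \<times> nat) set" where
  "param_idx d D = {(k, i, j). k \<in> {1..D} \<and> i < d (Suc k) \<and> j < d k}"

definition perturb :: "(nat \<Rightarrow> nat \<Rightarrow> nat \<Rightarrow> real) \<Rightarrow> nat \<times> nat \<times> nat \<Rightarrow> real \<Rightarrow> nat \<Rightarrow> nat \<Rightarrow> nat \<Rightarrow> real" where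
  "perturb \<theta> p t = (\<lambda>k i j. if (k, i, j) = p then \<theta> k i j + t else \<theta> k i j)"

text \<open>T(theta) = Tr E_{x,y}[Hessian of the loss]: the sum over all parameters of the
  expected diagonal second partial derivatives.\<close>
definition sharpness :: "(nat \<Rightarrow> nat) \<Rightarrow> nat \<Rightarrow> ((nat \<Rightarrow> real) \<times> (nat \<Rightarrow> real)) measure
    \<Rightarrow> (nat \<Rightarrow> nat \<Rightarrow> nat \<Rightarrow> real) \<Rightarrow> real" where
  "sharpness d D M \<theta> = (\<Sum>p\<in>param_idx d D.
      \<integral>xy. deriv (deriv (\<lambda>t. loss d D (fst xy) (snd xy) (perturb \<theta> p t))) 0 \<partial>M)"

end

theory Submission
  imports Defs
begin

text \<open>
  Write \<open>B = W\<^sub>k\<^sub>-\<^sub>1 \<cdots> W\<^sub>1\<close> and \<open>A = W\<^sub>D \<cdots> W\<^sub>k\<^sub>+\<^sub>1\<close>. Perturbing the single weight \<open>(k, i, j)\<close>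
  by \<open>t\<close> moves the output by \<open>t (B x)\<^sub>j A e\<^sub>i\<close>, so the loss is quadratic in \<open>t\<close> with second
  derivative \<open>(B x)\<^sub>j\<^sup>2 \<parallel>A e\<^sub>i\<parallel>\<^sup>2\<close>. Averaging over \<open>x\<close> and summing over \<open>j\<close> gives
  \<open>\<parallel>A e\<^sub>i\<parallel>\<^sup>2 \<langle>\<Sigma>\<^sub>x, B\<^sup>T B\<rangle>\<close>. The two factors are functions of disjoint sets of layers, hence
  independent, and for a product of independent centred Gaussian layers
  \<open>E\<langle>A u, A v\<rangle> = (\<Prod>\<^sub>l d\<^sub>l\<^sub>+\<^sub>1 \<sigma>\<^sub>l\<^sup>2) \<langle>u, v\<rangle>\<close>, by induction on the number of layers from
  \<open>E[W\<^sub>b\<^sub>c W\<^sub>b\<^sub>c\<^sub>'] = \<sigma>\<^sup>2 \<delta>\<^sub>c\<^sub>c\<^sub>'\<close>.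
\<close>

section \<open>Partial products of layers\<close>

fun partial_net :: "(nat \<Rightarrow> nat) \<Rightarrow> (nat \<Rightarrow> nat \<Rightarrow> nat \<Rightarrow> real) \<Rightarrow> nat \<Rightarrow> nat \<Rightarrow> (nat \<Rightarrow> real) \<Rightarrow> nat \<Rightarrow> real"
  where
  "partial_net d \<theta> k 0 v = v"
| "partial_net d \<theta> k (Suc m) v =
     (if Suc m \<le> k then v else (\<lambda>i. \<Sum>j<d (Suc m). \<theta> (Suc m) i j * partial_net d \<theta> k m v j))"

definition partial_gram :: "(nat \<Rightarrow> nat) \<Rightarrow> (nat \<Rightarrow> nat \<Rightarrow> nat \<Rightarrow> real) \<Rightarrow> nat \<Rightarrow> nat
    \<Rightarrow> (nat \<Rightarrow> real) \<Rightarrow> (nat \<Rightarrow> real) \<Rightarrow> real" where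
  "partial_gram d \<theta> k m u v = (\<Sum>c<d (Suc m). partial_net d \<theta> k m u c * partial_net d \<theta> k m v c)"

definition unit_vec :: "nat \<Rightarrow> nat \<Rightarrow> real" where
  "unit_vec i = (\<lambda>c. if c = i then 1 else 0)"

lemma partial_net_below: "m \<le> k \<Longrightarrow> partial_net d \<theta> k m v = v"
  by (induction m) auto

lemma partial_net_Suc:
  "k \<le> m \<Longrightarrow> partial_net d \<theta> k (Suc m) v = (\<lambda>i. \<Sum>j<d (Suc m). \<theta> (Suc m) i j * partial_net d \<theta> k m v j)"
  by simp

declare partial_net.simps(2) [simp del]

lemma layer_out_eq_partial_net: "layer_out d \<theta> m x = partial_net d \<theta> 0 m x"
  by (induction m) (auto simp: partial_net_Suc)

lemma partial_net_linear:
  assumes "k \<le> m" and "m = k \<Longrightarrow> c < d (Suc k)"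
  shows "partial_net d \<theta> k m v c = (\<Sum>b<d (Suc k). v b * partial_net d \<theta> k m (unit_vec b) c)"
  using assms
proof (induction m arbitrary: c rule: dec_induct)
  case base
  then show ?case by (simp add: partial_net_below unit_vec_def if_distrib cong: if_cong)
next
  case (step m)
  have "partial_net d \<theta> k m v j = (\<Sum>b<d (Suc k). v b * partial_net d \<theta> k m (unit_vec b) j)"
    if "j < d (Suc m)" for j
    using step.IH that by blast
  then have "partial_net d \<theta> k (Suc m) v c
      = (\<Sum>j<d (Suc m). \<theta> (Suc m) c j * (\<Sum>b<d (Suc k). v b * partial_net d \<theta> k m (unit_vec b) j))"
    using step.hyps by (simp add: partial_net_Suc)
  also have "\<dots> = (\<Sum>b<d (Suc k). v b * (\<Sum>j<d (Suc m). \<theta> (Suc m) c j * partial_net d \<theta> k m (unit_vec b) j))"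
    by (simp add: sum_distrib_left mult_ac sum.swap[of _ "{..<d (Suc m)}"])
  finally show ?case using step.hyps by (simp add: partial_net_Suc)
qed

lemma partial_net_mult_Suc:
  assumes "k \<le> n"
  shows "partial_net d \<theta> k (Suc n) u b * partial_net d \<theta> k (Suc n) v b'
    = (\<Sum>c<d (Suc n). \<Sum>c'<d (Suc n).
        \<theta> (Suc n) b c * \<theta> (Suc n) b' c' * (partial_net d \<theta> k n u c * partial_net d \<theta> k n v c'))"
  using assms by (simp add: partial_net_Suc sum_product mult_ac)

lemma sum_unit_vec_mult:
  "(\<Sum>c<n. unit_vec a c * unit_vec b c) = (if a = b \<and> a < n then 1 else 0)"
proof -
  have "(\<Sum>c<n. unit_vec a c * unit_vec b c) = (\<Sum>c<n. if c = a then (if a = b then 1 else 0) else 0)"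
    by (intro sum.cong) (auto simp: unit_vec_def)
  then show ?thesis by simp
qed

section \<open>The loss along a single coordinate\<close>

lemma layer_out_perturb_below:
  "m < k \<Longrightarrow> layer_out d (perturb \<theta> (k, i, j) t) m x = layer_out d \<theta> m x"
  by (induction m) (auto simp: perturb_def)

lemma layer_out_perturb:
  assumes "(k, i, j) \<in> param_idx d D" and "k \<le> m"
  shows "layer_out d (perturb \<theta> (k, i, j) t) m x
    = (\<lambda>c. layer_out d \<theta> m x c + t * layer_out d \<theta> (k - 1) x j * partial_net d \<theta> k m (unit_vec i) c)"
  using assms(2)
proof (induction m rule: dec_induct)
  case base
  obtain k' where k': "k = Suc k'" and j: "j < d k"
    using assms(1) by (auto simp: param_idx_def dest: Suc_le_D)
  have below: "layer_out d (perturb \<theta> (k, i, j) t) k' x = layer_out d \<theta> k' x"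
    using k' by (simp add: layer_out_perturb_below)
  have "(\<Sum>j'<d k. (\<theta> k c j' + (if c = i \<and> j' = j then t else 0)) * layer_out d \<theta> k' x j')
      = layer_out d \<theta> k x c + t * layer_out d \<theta> k' x j * unit_vec i c" for c
  proof -
    have "(\<Sum>j'<d k. (if c = i \<and> j' = j then t else 0) * layer_out d \<theta> k' x j')
        = (\<Sum>j'<d k. if j' = j then t * layer_out d \<theta> k' x j * unit_vec i c else 0)"
      by (intro sum.cong) (auto simp: unit_vec_def)
    then show ?thesis using j k' by (simp add: distrib_right sum.distrib)
  qed
  moreover have "perturb \<theta> (k, i, j) t k c j' = \<theta> k c j' + (if c = i \<and> j' = j then t else 0)" for c j'
    by (simp add: perturb_def)
  ultimately show ?case
    using below by (simp add: k' partial_net_below)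
next
  case (step m)
  then show ?case
    by (simp add: perturb_def partial_net_Suc distrib_left sum.distrib sum_distrib_left mult_ac)
qed

lemma deriv2_quadratic: "deriv (deriv (\<lambda>t::real. \<alpha> + \<beta> * t + \<gamma> * t\<^sup>2)) 0 = 2 * \<gamma>"
proof -
  have "deriv (\<lambda>t::real. \<alpha> + \<beta> * t + \<gamma> * t\<^sup>2) = (\<lambda>t. \<beta> + 2 * \<gamma> * t)"
    by (intro ext DERIV_imp_deriv) (auto intro!: derivative_eq_intros)
  moreover have "deriv (\<lambda>t::real. \<beta> + 2 * \<gamma> * t) 0 = 2 * \<gamma>"
    by (rule DERIV_imp_deriv) (auto intro!: derivative_eq_intros)
  ultimately show ?thesis by simp
qed

lemma deriv2_loss_perturb:
  assumes "(k, i, j) \<in> param_idx d D"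
  shows "deriv (deriv (\<lambda>t. loss d D x y (perturb \<theta> (k, i, j) t))) 0
    = (layer_out d \<theta> (k - 1) x j)\<^sup>2 * partial_gram d \<theta> k D (unit_vec i) (unit_vec i)"
proof -
  define h where "h = layer_out d \<theta> (k - 1) x j"
  define g where "g = partial_net d \<theta> k D (unit_vec i)"
  define r where "r c = y c - net d D \<theta> x c" for c
  have "loss d D x y (perturb \<theta> (k, i, j) t)
      = 1/2 * (\<Sum>c<d (Suc D). (r c)\<^sup>2) + (- (\<Sum>c<d (Suc D). r c * h * g c)) * t
        + (1/2 * (\<Sum>c<d (Suc D). (h * g c)\<^sup>2)) * t\<^sup>2" for t
  proof -
    have "loss d D x y (perturb \<theta> (k, i, j) t) = 1/2 * (\<Sum>c<d (Suc D). (r c - t * h * g c)\<^sup>2)"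
      using assms by (simp add: loss_def net_def layer_out_perturb[OF assms] param_idx_def r_def
          h_def g_def diff_diff_eq)
    also have "\<dots> = 1/2 * (\<Sum>c<d (Suc D). (r c)\<^sup>2 - 2 * t * (r c * h * g c) + t\<^sup>2 * (h * g c)\<^sup>2)"
      by (simp add: power2_eq_square algebra_simps)
    finally show ?thesis
      by (simp add: sum.distrib sum_subtractf sum_distrib_left sum_distrib_right algebra_simps)
  qed
  note quadratic = this
  show ?thesis
    unfolding quadratic deriv2_quadratic
    by (simp add: partial_gram_def h_def g_def sum_distrib_left power2_eq_square mult_ac)
qed

lemma integrable_mult_of_square_integrable:
  fixes f g :: "'a \<Rightarrow> real"
  assumes "f \<in> borel_measurable M" "g \<in> borel_measurable M"
    and "integrable M (\<lambda>x. (f x)\<^sup>2)" "integrable M (\<lambda>x. (g x)\<^sup>2)"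
  shows "integrable M (\<lambda>x. f x * g x)"
proof (rule Bochner_Integration.integrable_bound)
  show "integrable M (\<lambda>x. (f x)\<^sup>2 + (g x)\<^sup>2)"
    using assms by auto
  have "\<bar>f x * g x\<bar> \<le> (f x)\<^sup>2 + (g x)\<^sup>2" for x
  proof -
    have "\<bar>f x * g x\<bar> \<le> 2 * (\<bar>f x\<bar> * \<bar>g x\<bar>)"
      by (simp add: abs_mult)
    also have "\<dots> \<le> (f x)\<^sup>2 + (g x)\<^sup>2"
      using sum_squares_bound[of "\<bar>f x\<bar>" "\<bar>g x\<bar>"] by (simp add: mult.assoc)
    finally show ?thesis .
  qed
  then show "AE x in M. norm (f x * g x) \<le> norm ((f x)\<^sup>2 + (g x)\<^sup>2)"
    by simp
qed (use assms in auto)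

lemma integral_square_of_sum:
  fixes X :: "'i \<Rightarrow> 'a \<Rightarrow> real"
  assumes "finite A"
    and "\<And>a. a \<in> A \<Longrightarrow> X a \<in> borel_measurable M"
    and "\<And>a. a \<in> A \<Longrightarrow> integrable M (\<lambda>\<omega>. (X a \<omega>)\<^sup>2)"
  shows "(\<integral>\<omega>. (\<Sum>a\<in>A. c a * X a \<omega>)\<^sup>2 \<partial>M) = (\<Sum>a\<in>A. \<Sum>b\<in>A. c a * c b * (\<integral>\<omega>. X a \<omega> * X b \<omega> \<partial>M))"
proof -
  have int: "integrable M (\<lambda>\<omega>. X a \<omega> * X b \<omega>)" if "a \<in> A" "b \<in> A" for a b
    using that assms by (intro integrable_mult_of_square_integrable) auto
  have "(\<Sum>a\<in>A. c a * X a \<omega>)\<^sup>2 = (\<Sum>a\<in>A. \<Sum>b\<in>A. c a * c b * (X a \<omega> * X b \<omega>))" for \<omega>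
    by (simp add: power2_eq_square sum_product mult_ac)
  then show ?thesis
    using int by (simp add: Bochner_Integration.integral_sum integrable_sum)
qed

definition input_moment :: "((nat \<Rightarrow> real) \<times> (nat \<Rightarrow> real)) measure \<Rightarrow> nat \<Rightarrow> nat \<Rightarrow> real" where
  "input_moment M a b = (\<integral>xy. fst xy a * fst xy b \<partial>M)"

lemma integral_deriv2_loss_perturb:
  assumes "(k, i, j) \<in> param_idx d D"
    and "\<And>a. a < d 1 \<Longrightarrow> (\<lambda>xy. fst xy a) \<in> borel_measurable M"
    and "\<And>a. a < d 1 \<Longrightarrow> integrable M (\<lambda>xy. (fst xy a)\<^sup>2)"
  shows "(\<integral>xy. deriv (deriv (\<lambda>t. loss d D (fst xy) (snd xy) (perturb \<theta> (k, i, j) t))) 0 \<partial>M)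
    = (\<Sum>a<d 1. \<Sum>b<d 1. input_moment M a b * (partial_gram d \<theta> k D (unit_vec i) (unit_vec i)
        * (partial_net d \<theta> 0 (k - 1) (unit_vec a) j * partial_net d \<theta> 0 (k - 1) (unit_vec b) j)))"
proof -
  define G where "G a = partial_net d \<theta> 0 (k - 1) (unit_vec a) j" for a
  have "layer_out d \<theta> (k - 1) x j = (\<Sum>a<d 1. G a * x a)" for x
    using assms(1) by (auto simp: param_idx_def layer_out_eq_partial_net G_def mult.commute
        intro!: partial_net_linear)
  moreover have "(\<integral>xy. (\<Sum>a<d 1. G a * fst xy a)\<^sup>2 \<partial>M)
      = (\<Sum>a<d 1. \<Sum>b<d 1. G a * G b * input_moment M a b)"
    unfolding input_moment_def by (rule integral_square_of_sum) (use assms(2,3) in auto)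
  ultimately show ?thesis
    by (simp add: deriv2_loss_perturb[OF assms(1)] G_def sum_distrib_left mult_ac)
qed

lemma sharpness_eq_sum_gram:
  assumes "\<And>a. a < d 1 \<Longrightarrow> (\<lambda>xy. fst xy a) \<in> borel_measurable M"
    and "\<And>a. a < d 1 \<Longrightarrow> integrable M (\<lambda>xy. (fst xy a)\<^sup>2)"
  shows "sharpness d D M \<theta> = (\<Sum>k=1..D. \<Sum>i<d (Suc k). \<Sum>a<d 1. \<Sum>b<d 1. input_moment M a b *
      (partial_gram d \<theta> k D (unit_vec i) (unit_vec i) * partial_gram d \<theta> 0 (k - 1) (unit_vec a) (unit_vec b)))"
proof -
  define G where "G k a j = partial_net d \<theta> 0 (k - 1) (unit_vec a) j" for k a j
  define U where "U k i = partial_gram d \<theta> k D (unit_vec i) (unit_vec i)" for k i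
  define F where "F p = (\<integral>xy. deriv (deriv (\<lambda>t. loss d D (fst xy) (snd xy) (perturb \<theta> p t))) 0 \<partial>M)"
    for p
  have "param_idx d D = Sigma {1..D} (\<lambda>k. {..<d (Suc k)} \<times> {..<d k})"
    by (auto simp: param_idx_def)
  then have "sharpness d D M \<theta> = (\<Sum>k=1..D. \<Sum>q\<in>{..<d (Suc k)} \<times> {..<d k}. F (k, q))"
    unfolding sharpness_def F_def[symmetric] by (simp add: sum.Sigma)
  also have "\<dots> = (\<Sum>k=1..D. \<Sum>(i, j)\<in>{..<d (Suc k)} \<times> {..<d k}. \<Sum>a<d 1. \<Sum>b<d 1.
          input_moment M a b * (U k i * (G k a j * G k b j)))"
  proof (intro sum.cong refl)
    fix k q
    assume "k \<in> {1..D}" "q \<in> {..<d (Suc k)} \<times> {..<d k}"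
    then have "(k, fst q, snd q) \<in> param_idx d D"
      by (auto simp: param_idx_def)
    from integral_deriv2_loss_perturb[OF this assms]
    show "F (k, q) = (case q of (i, j) \<Rightarrow> \<Sum>a<d 1. \<Sum>b<d 1.
        input_moment M a b * (U k i * (G k a j * G k b j)))"
      by (simp add: F_def U_def G_def split_beta)
  qed
  also have "\<dots> = (\<Sum>k=1..D. \<Sum>i<d (Suc k). \<Sum>j<d k. \<Sum>a<d 1. \<Sum>b<d 1.
      input_moment M a b * (U k i * (G k a j * G k b j)))"
    by (intro sum.cong refl) (simp add: sum.cartesian_product')
  also have "\<dots> = (\<Sum>k=1..D. \<Sum>i<d (Suc k). \<Sum>a<d 1. \<Sum>b<d 1. input_moment M a b *
      (U k i * partial_gram d \<theta> 0 (k - 1) (unit_vec a) (unit_vec b)))"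
  proof (rule sum.cong[OF refl], rule sum.cong[OF refl])
    fix k i
    assume "k \<in> {1..D}"
    then have "Suc (k - 1) = k" by simp
    have "(\<Sum>j<d k. \<Sum>a<d 1. \<Sum>b<d 1. input_moment M a b * (U k i * (G k a j * G k b j)))
        = (\<Sum>a<d 1. \<Sum>b<d 1. \<Sum>j<d k. input_moment M a b * (U k i * (G k a j * G k b j)))"
      by (simp add: sum.swap[of _ "{..<d k}"])
    then show "(\<Sum>j<d k. \<Sum>a<d 1. \<Sum>b<d 1. input_moment M a b * (U k i * (G k a j * G k b j)))
        = (\<Sum>a<d 1. \<Sum>b<d 1. input_moment M a b *
            (U k i * partial_gram d \<theta> 0 (k - 1) (unit_vec a) (unit_vec b)))"
      using \<open>Suc (k - 1) = k\<close> by (simp add: partial_gram_def G_def sum_distrib_left)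
  qed
  finally show ?thesis by (simp add: U_def)
qed

section \<open>Random variables determined by a subfamily\<close>

definition determined_by :: "('i \<Rightarrow> 'w \<Rightarrow> real) \<Rightarrow> 'i set \<Rightarrow> ('w \<Rightarrow> real) \<Rightarrow> bool" where
  "determined_by X J Y \<longleftrightarrow> (\<exists>g \<in> borel_measurable (PiM J (\<lambda>_. borel)). \<forall>\<omega>. Y \<omega> = g (\<lambda>i\<in>J. X i \<omega>))"

lemma determined_by_const: "determined_by X J (\<lambda>_. c)"
  unfolding determined_by_def by (intro bexI[of _ "\<lambda>_. c"]) auto

lemma determined_by_var: "i \<in> J \<Longrightarrow> determined_by X J (X i)"
  unfolding determined_by_def by (intro bexI[of _ "\<lambda>f. f i"]) auto

lemma determined_by_combine:
  assumes "determined_by X J Y" "determined_by X J Z"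
    and "\<And>g h :: ('i \<Rightarrow> real) \<Rightarrow> real. g \<in> borel_measurable (PiM J (\<lambda>_. borel)) \<Longrightarrow> h \<in> borel_measurable (PiM J (\<lambda>_. borel))
      \<Longrightarrow> (\<lambda>f. F (g f) (h f)) \<in> borel_measurable (PiM J (\<lambda>_. borel))"
  shows "determined_by X J (\<lambda>\<omega>. F (Y \<omega>) (Z \<omega>))"
proof -
  obtain g h where "g \<in> borel_measurable (PiM J (\<lambda>_. borel))" "h \<in> borel_measurable (PiM J (\<lambda>_. borel))"
    and eqs: "\<forall>\<omega>. Y \<omega> = g (\<lambda>i\<in>J. X i \<omega>)" "\<forall>\<omega>. Z \<omega> = h (\<lambda>i\<in>J. X i \<omega>)"
    using assms(1,2) unfolding determined_by_def by blast
  then have "(\<lambda>f. F (g f) (h f)) \<in> borel_measurable (PiM J (\<lambda>_. borel))"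
    using assms(3) by blast
  with eqs show ?thesis
    unfolding determined_by_def by (intro bexI[of _ "\<lambda>f. F (g f) (h f)"]) auto
qed

lemma determined_by_add: "determined_by X J Y \<Longrightarrow> determined_by X J Z \<Longrightarrow> determined_by X J (\<lambda>\<omega>. Y \<omega> + Z \<omega>)"
  by (rule determined_by_combine) (auto intro: borel_measurable_add)

lemma determined_by_mult: "determined_by X J Y \<Longrightarrow> determined_by X J Z \<Longrightarrow> determined_by X J (\<lambda>\<omega>. Y \<omega> * Z \<omega>)"
  by (rule determined_by_combine) (auto intro: borel_measurable_times)

lemma determined_by_sum:
  "(\<And>s. s \<in> S \<Longrightarrow> determined_by X J (Y s)) \<Longrightarrow> determined_by X J (\<lambda>\<omega>. \<Sum>s\<in>S. Y s \<omega>)"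
  by (induction S rule: infinite_finite_induct) (auto intro: determined_by_const determined_by_add)

lemma determined_by_mono:
  assumes "J \<subseteq> J'" "determined_by X J Y"
  shows "determined_by X J' Y"
proof -
  obtain g where g: "g \<in> borel_measurable (PiM J (\<lambda>_. borel))" "\<forall>\<omega>. Y \<omega> = g (\<lambda>i\<in>J. X i \<omega>)"
    using assms(2) unfolding determined_by_def by blast
  have "(\<lambda>f. g (restrict f J)) \<in> borel_measurable (PiM J' (\<lambda>_. borel))"
    using measurable_comp[OF measurable_restrict_subset[OF assms(1)] g(1)] by (simp add: comp_def)
  moreover have "restrict (\<lambda>i\<in>J'. X i \<omega>) J = (\<lambda>i\<in>J. X i \<omega>)" for \<omega>
    using assms(1) by (auto simp: restrict_def fun_eq_iff)
  ultimately show ?thesis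
    using g(2) unfolding determined_by_def by (intro bexI[of _ "\<lambda>f. g (restrict f J)"]) auto
qed

context prob_space
begin

lemma indep_var_determined_by_disjoint:
  assumes "indep_vars (\<lambda>_. borel) X I" "J1 \<inter> J2 = {}" "J1 \<subseteq> I" "J2 \<subseteq> I"
    and "determined_by X J1 Y1" "determined_by X J2 Y2"
  shows "indep_var borel Y1 borel Y2"
proof -
  obtain g1 where g1: "g1 \<in> borel_measurable (PiM J1 (\<lambda>_. borel))" "\<forall>\<omega>. Y1 \<omega> = g1 (\<lambda>i\<in>J1. X i \<omega>)"
    using assms(5) unfolding determined_by_def by blast
  obtain g2 where g2: "g2 \<in> borel_measurable (PiM J2 (\<lambda>_. borel))" "\<forall>\<omega>. Y2 \<omega> = g2 (\<lambda>i\<in>J2. X i \<omega>)"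
    using assms(6) unfolding determined_by_def by blast
  have "indep_var borel (g1 \<circ> (\<lambda>\<omega>. \<lambda>i\<in>J1. X i \<omega>)) borel (g2 \<circ> (\<lambda>\<omega>. \<lambda>i\<in>J2. X i \<omega>))"
    using indep_var_restrict[OF assms(1-4)] g1(1) g2(1) by (rule indep_var_compose)
  moreover have "Y1 = g1 \<circ> (\<lambda>\<omega>. \<lambda>i\<in>J1. X i \<omega>)" "Y2 = g2 \<circ> (\<lambda>\<omega>. \<lambda>i\<in>J2. X i \<omega>)"
    using g1(2) g2(2) by auto
  ultimately show ?thesis by simp
qed

lemma has_bochner_integral_mult_determined_by_disjoint:
  assumes "indep_vars (\<lambda>_. borel) X I" "J1 \<inter> J2 = {}" "J1 \<subseteq> I" "J2 \<subseteq> I"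
    and "determined_by X J1 Y1" "determined_by X J2 Y2"
    and "has_bochner_integral M Y1 e1" "has_bochner_integral M Y2 e2"
  shows "has_bochner_integral M (\<lambda>\<omega>. Y1 \<omega> * Y2 \<omega>) (e1 * e2)"
proof -
  have "indep_var borel Y1 borel Y2"
    using assms(1-6) by (rule indep_var_determined_by_disjoint)
  with assms(7,8) show ?thesis
    by (auto simp: has_bochner_integral_iff indep_var_integrable indep_var_lebesgue_integral)
qed

lemma has_bochner_integral_normal_moments:
  assumes "0 < \<sigma>" and X: "distributed M lborel X (normal_density 0 \<sigma>)"
  shows "has_bochner_integral M X 0" and "has_bochner_integral M (\<lambda>\<omega>. (X \<omega>)\<^sup>2) (\<sigma>\<^sup>2)"
proof -
  have "integrable M X"
    using assms by (intro distributed_integrable_var[OF X] integrable_normal_moment_nz_1) auto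
  then show "has_bochner_integral M X 0"
    using normal_distributed_expectation[OF assms] by (simp add: has_bochner_integral_iff)
  have "integrable lborel (\<lambda>x. normal_density 0 \<sigma> x * x\<^sup>2)"
    using integrable_normal_moment[OF assms(1), of 0 2] by simp
  then have "integrable M (\<lambda>\<omega>. (X \<omega>)\<^sup>2)"
    using distributed_integrable[OF X, of "\<lambda>x. x\<^sup>2"] by simp
  then show "has_bochner_integral M (\<lambda>\<omega>. (X \<omega>)\<^sup>2) (\<sigma>\<^sup>2)"
    using normal_distributed_variance[OF assms] normal_distributed_expectation[OF assms]
    by (simp add: has_bochner_integral_iff)
qed

end

section \<open>Expected sharpness under Gaussian initialization\<close>

lemma prod_remove_split:
  fixes g :: "nat \<Rightarrow> 'a::comm_monoid_mult"
  assumes "k \<in> {1..D}"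
  shows "(\<Prod>l\<in>{k<..D}. g l) * (\<Prod>l\<in>{0<..k - 1}. g l) = (\<Prod>l\<in>{1..D} - {k}. g l)"
proof -
  have "{1..D} - {k} = {k<..D} \<union> {0<..k - 1}" and "{k<..D} \<inter> {0<..k - 1} = {}"
    using assms by auto
  then show ?thesis
    by (simp add: prod.union_disjoint)
qed

lemma dim_mult_prod_layer_factors:
  fixes d :: "nat \<Rightarrow> nat"
  assumes "k \<in> {1..D}"
  shows "real (d (Suc k)) * ((\<Prod>l\<in>{k<..D}. real (d (Suc l)) * (\<sigma> l)\<^sup>2)
      * (\<Prod>l\<in>{0<..k - 1}. real (d (Suc l)) * (\<sigma> l)\<^sup>2))
    = real (d (Suc D)) * (\<Prod>k=2..D. real (d k)) * (\<Prod>j\<in>{1..D} - {k}. (\<sigma> j)\<^sup>2)"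
proof -
  have "real (d (Suc k)) * (\<Prod>l\<in>{1..D} - {k}. real (d (Suc l))) = (\<Prod>l=1..D. real (d (Suc l)))"
    using assms by (simp add: prod.remove)
  also have "\<dots> = (\<Prod>m=2..Suc D. real (d m))"
    using prod.shift_bounds_cl_Suc_ivl[of "\<lambda>m. real (d m)" 1 D] by (simp add: numeral_2_eq_2)
  also have "\<dots> = real (d (Suc D)) * (\<Prod>k=2..D. real (d k))"
    using assms by (simp add: prod.nat_ivl_Suc')
  finally have dims: "real (d (Suc k)) * (\<Prod>l\<in>{1..D} - {k}. real (d (Suc l)))
      = real (d (Suc D)) * (\<Prod>k=2..D. real (d k))" .
  have "(\<Prod>l\<in>{k<..D}. real (d (Suc l)) * (\<sigma> l)\<^sup>2) * (\<Prod>l\<in>{0<..k - 1}. real (d (Suc l)) * (\<sigma> l)\<^sup>2)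
      = (\<Prod>l\<in>{1..D} - {k}. real (d (Suc l))) * (\<Prod>l\<in>{1..D} - {k}. (\<sigma> l)\<^sup>2)"
    unfolding prod_remove_split[OF assms] by (rule prod.distrib)
  then show ?thesis
    by (simp only: mult.assoc[symmetric] dims)
qed

lemma sum_prod_remove_const:
  assumes "\<forall>k\<in>{1..D}. \<sigma> k = s"
  shows "(\<Sum>k=1..D. \<Prod>j\<in>{1..D} - {k}. (\<sigma> j)\<^sup>2) = real D * (s\<^sup>2) ^ (D - 1)"
proof -
  have "(\<Prod>j\<in>{1..D} - {k}. (\<sigma> j)\<^sup>2) = (s\<^sup>2) ^ (D - 1)" if "k \<in> {1..D}" for k
  proof -
    have "(\<Prod>j\<in>{1..D} - {k}. (\<sigma> j)\<^sup>2) = (\<Prod>j\<in>{1..D} - {k}. s\<^sup>2)"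
      using assms by (intro prod.cong) auto
    then show ?thesis
      using that by simp
  qed
  then show ?thesis
    by simp
qed

locale gaussian_weights = prob_space P for P :: "'w measure" +
  fixes W :: "'w \<Rightarrow> nat \<Rightarrow> nat \<Rightarrow> nat \<Rightarrow> real" and d :: "nat \<Rightarrow> nat" and D :: nat
    and \<sigma> :: "nat \<Rightarrow> real"
  assumes sigma_pos: "\<And>k. k \<in> {1..D} \<Longrightarrow> \<sigma> k > 0"
    and indep_weights: "indep_vars (\<lambda>_. borel) (\<lambda>(k, i, j) \<omega>. W \<omega> k i j) (param_idx d D)"
    and normal_weights: "\<And>k i j. (k, i, j) \<in> param_idx d D \<Longrightarrow>
      distributed P lborel (\<lambda>\<omega>. W \<omega> k i j) (\<lambda>v. ennreal (normal_density 0 (\<sigma> k) v))"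
begin

definition weight :: "nat \<times> nat \<times> nat \<Rightarrow> 'w \<Rightarrow> real" where
  "weight = (\<lambda>(k, i, j) \<omega>. W \<omega> k i j)"

definition layer_params :: "nat set \<Rightarrow> (nat \<times> nat \<times> nat) set" where
  "layer_params K = {p \<in> param_idx d D. fst p \<in> K}"

lemma determined_by_weight: "(k, i, j) \<in> J \<Longrightarrow> determined_by weight J (\<lambda>\<omega>. W \<omega> k i j)"
  using determined_by_var[of "(k, i, j)" J weight] by (simp add: weight_def)

lemma has_bochner_integral_weight_pair:
  assumes p: "(k, i, j) \<in> param_idx d D" and q: "(k, i', j') \<in> param_idx d D"
  shows "has_bochner_integral P (\<lambda>\<omega>. W \<omega> k i j * W \<omega> k i' j') (if i = i' \<and> j = j' then (\<sigma> k)\<^sup>2 else 0)"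
proof -
  have \<sigma>: "0 < \<sigma> k"
    using p sigma_pos by (auto simp: param_idx_def)
  show ?thesis
  proof (cases "i = i' \<and> j = j'")
    case True
    then show ?thesis
      using has_bochner_integral_normal_moments(2)[OF \<sigma> normal_weights[OF p]]
      by (simp add: power2_eq_square)
  next
    case False
    then have disjoint: "{(k, i, j)} \<inter> {(k, i', j')} = {}"
      by auto
    have "has_bochner_integral P (\<lambda>\<omega>. W \<omega> k i j * W \<omega> k i' j') (0 * 0)"
      using p q
      by (intro has_bochner_integral_mult_determined_by_disjoint[OF indep_weights[folded weight_def]
          disjoint _ _ determined_by_weight determined_by_weight
          has_bochner_integral_normal_moments(1)[OF \<sigma> normal_weights[OF p]]
          has_bochner_integral_normal_moments(1)[OF \<sigma> normal_weights[OF q]]]) auto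
    then show ?thesis
      unfolding if_not_P[OF False] by simp
  qed
qed

lemma has_bochner_integral_weight_pair_mult:
  assumes p: "(k, i, j) \<in> param_idx d D" and q: "(k, i', j') \<in> param_idx d D"
    and J: "J \<subseteq> param_idx d D" "\<forall>p\<in>J. fst p \<noteq> k"
    and Y: "determined_by weight J Y" "integrable P Y"
  shows "has_bochner_integral P (\<lambda>\<omega>. W \<omega> k i j * W \<omega> k i' j' * Y \<omega>)
    (if i = i' \<and> j = j' then (\<sigma> k)\<^sup>2 * expectation Y else 0)"
proof -
  have "{(k, i, j), (k, i', j')} \<inter> J = {}"
    using J(2) by auto
  from has_bochner_integral_mult_determined_by_disjoint[OF indep_weights[folded weight_def] this _ J(1)
      _ Y(1) has_bochner_integral_weight_pair[OF p q] has_bochner_integral_integrable[OF Y(2)]]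
  have "has_bochner_integral P (\<lambda>\<omega>. W \<omega> k i j * W \<omega> k i' j' * Y \<omega>)
      ((if i = i' \<and> j = j' then (\<sigma> k)\<^sup>2 else 0) * expectation Y)"
    using p q by (simp add: determined_by_mult determined_by_weight)
  moreover have "(if i = i' \<and> j = j' then (\<sigma> k)\<^sup>2 else 0) * expectation Y
      = (if i = i' \<and> j = j' then (\<sigma> k)\<^sup>2 * expectation Y else 0)"
    by simp
  ultimately show ?thesis
    by (simp only:)
qed

lemma determined_by_partial_net:
  assumes "m \<le> D" "b < d (Suc m)"
  shows "determined_by weight (layer_params {k<..m}) (\<lambda>\<omega>. partial_net d (W \<omega>) k m u b)"
  using assms
proof (induction m arbitrary: b)
  case 0
  then show ?case by (simp add: determined_by_const)
next
  case (Suc m)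
  show ?case
  proof (cases "Suc m \<le> k")
    case True
    then show ?thesis by (simp add: partial_net_below determined_by_const)
  next
    case False
    have "determined_by weight (layer_params {k<..Suc m})
        (\<lambda>\<omega>. W \<omega> (Suc m) b c * partial_net d (W \<omega>) k m u c)" if "c < d (Suc m)" for c
    proof (rule determined_by_mult)
      show "determined_by weight (layer_params {k<..Suc m}) (\<lambda>\<omega>. W \<omega> (Suc m) b c)"
        using False Suc.prems that
        by (intro determined_by_weight) (auto simp: layer_params_def param_idx_def)
      show "determined_by weight (layer_params {k<..Suc m}) (\<lambda>\<omega>. partial_net d (W \<omega>) k m u c)"
      proof (rule determined_by_mono)
        show "layer_params {k<..m} \<subseteq> layer_params {k<..Suc m}"
          by (auto simp: layer_params_def)
        show "determined_by weight (layer_params {k<..m}) (\<lambda>\<omega>. partial_net d (W \<omega>) k m u c)"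
          using Suc.IH Suc.prems that by simp
      qed
    qed
    then have "determined_by weight (layer_params {k<..Suc m})
        (\<lambda>\<omega>. \<Sum>c<d (Suc m). W \<omega> (Suc m) b c * partial_net d (W \<omega>) k m u c)"
      by (rule determined_by_sum) simp
    then show ?thesis
      using False by (simp add: partial_net_Suc)
  qed
qed

lemma determined_by_partial_gram:
  "m \<le> D \<Longrightarrow> determined_by weight (layer_params {k<..m}) (\<lambda>\<omega>. partial_gram d (W \<omega>) k m u v)"
  unfolding partial_gram_def
  by (intro determined_by_sum determined_by_mult determined_by_partial_net) auto

lemma has_bochner_integral_weight_pair_partial_net:
  assumes "k \<le> n" "Suc n \<le> D" "b < d (Suc (Suc n))" "b' < d (Suc (Suc n))" "c < d (Suc n)" "c' < d (Suc n)"
    and "integrable P (\<lambda>\<omega>. partial_net d (W \<omega>) k n u c * partial_net d (W \<omega>) k n v c')"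
  shows "has_bochner_integral P
    (\<lambda>\<omega>. W \<omega> (Suc n) b c * W \<omega> (Suc n) b' c' * (partial_net d (W \<omega>) k n u c * partial_net d (W \<omega>) k n v c'))
    (if b = b' \<and> c = c' then (\<sigma> (Suc n))\<^sup>2
      * expectation (\<lambda>\<omega>. partial_net d (W \<omega>) k n u c * partial_net d (W \<omega>) k n v c') else 0)"
  using assms
  by (intro has_bochner_integral_weight_pair_mult[where J = "layer_params {k<..n}"] determined_by_mult
      determined_by_partial_net) (auto simp: param_idx_def layer_params_def)

lemma integrable_partial_net_mult:
  assumes "k \<le> m" "m \<le> D" "b < d (Suc m)" "b' < d (Suc m)"
  shows "integrable P (\<lambda>\<omega>. partial_net d (W \<omega>) k m u b * partial_net d (W \<omega>) k m v b')"
  using assms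
proof (induction m arbitrary: b b' rule: dec_induct)
  case base
  then show ?case by (simp add: partial_net_below)
next
  case (step n)
  have "integrable P (\<lambda>\<omega>. W \<omega> (Suc n) b c * W \<omega> (Suc n) b' c'
      * (partial_net d (W \<omega>) k n u c * partial_net d (W \<omega>) k n v c'))"
    if "c < d (Suc n)" "c' < d (Suc n)" for c c'
    using step that
    by (intro integrable.intros[OF has_bochner_integral_weight_pair_partial_net]) auto
  then show ?case
    unfolding partial_net_mult_Suc[OF step.hyps(1)] by (intro Bochner_Integration.integrable_sum) auto
qed

lemma has_bochner_integral_partial_gram_Suc:
  assumes "k \<le> n" "Suc n \<le> D"
  shows "has_bochner_integral P (\<lambda>\<omega>. partial_gram d (W \<omega>) k (Suc n) u v)
    (real (d (Suc (Suc n))) * (\<sigma> (Suc n))\<^sup>2 * expectation (\<lambda>\<omega>. partial_gram d (W \<omega>) k n u v))"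
proof -
  define E where "E c = expectation (\<lambda>\<omega>. partial_net d (W \<omega>) k n u c * partial_net d (W \<omega>) k n v c)" for c
  have integral: "has_bochner_integral P (\<lambda>\<omega>. partial_gram d (W \<omega>) k (Suc n) u v)
      (\<Sum>b<d (Suc (Suc n)). \<Sum>c<d (Suc n). \<Sum>c'<d (Suc n).
        if c = c' then (\<sigma> (Suc n))\<^sup>2 * E c else 0)"
    unfolding partial_gram_def partial_net_mult_Suc[OF assms(1)]
  proof (intro has_bochner_integral_sum)
    fix b c c'
    assume "b \<in> {..<d (Suc (Suc n))}" "c \<in> {..<d (Suc n)}" "c' \<in> {..<d (Suc n)}"
    show "has_bochner_integral P (\<lambda>\<omega>. W \<omega> (Suc n) b c * W \<omega> (Suc n) b c'
        * (partial_net d (W \<omega>) k n u c * partial_net d (W \<omega>) k n v c'))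
      (if c = c' then (\<sigma> (Suc n))\<^sup>2 * E c else 0)"
    proof -
      have "has_bochner_integral P (\<lambda>\<omega>. W \<omega> (Suc n) b c * W \<omega> (Suc n) b c'
          * (partial_net d (W \<omega>) k n u c * partial_net d (W \<omega>) k n v c'))
        (if b = b \<and> c = c' then (\<sigma> (Suc n))\<^sup>2 * expectation (\<lambda>\<omega>. partial_net d (W \<omega>) k n u c
          * partial_net d (W \<omega>) k n v c') else 0)"
        using assms \<open>b \<in> _\<close> \<open>c \<in> _\<close> \<open>c' \<in> _\<close>
        by (intro has_bochner_integral_weight_pair_partial_net integrable_partial_net_mult) auto
      then show ?thesis
        by (cases "c = c'") (simp_all add: E_def)
    qed
  qed
  have "(\<Sum>b<d (Suc (Suc n)). \<Sum>c<d (Suc n). \<Sum>c'<d (Suc n).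
        if c = c' then (\<sigma> (Suc n))\<^sup>2 * E c else 0)
      = real (d (Suc (Suc n))) * (\<sigma> (Suc n))\<^sup>2 * (\<Sum>c<d (Suc n). E c)"
    by (simp add: sum_distrib_left mult.assoc)
  also have "(\<Sum>c<d (Suc n). E c) = expectation (\<lambda>\<omega>. partial_gram d (W \<omega>) k n u v)"
    using assms unfolding E_def partial_gram_def
    by (intro Bochner_Integration.integral_sum[symmetric] integrable_partial_net_mult) auto
  finally have "(\<Sum>b<d (Suc (Suc n)). \<Sum>c<d (Suc n). \<Sum>c'<d (Suc n).
        if c = c' then (\<sigma> (Suc n))\<^sup>2 * E c else 0)
      = real (d (Suc (Suc n))) * (\<sigma> (Suc n))\<^sup>2 * expectation (\<lambda>\<omega>. partial_gram d (W \<omega>) k n u v)" .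
  with integral show ?thesis
    by (simp only:)
qed

lemma has_bochner_integral_partial_gram:
  assumes "k \<le> m" "m \<le> D"
  shows "has_bochner_integral P (\<lambda>\<omega>. partial_gram d (W \<omega>) k m u v)
    ((\<Prod>l\<in>{k<..m}. real (d (Suc l)) * (\<sigma> l)\<^sup>2) * (\<Sum>b<d (Suc k). u b * v b))"
  using assms
proof (induction m rule: dec_induct)
  case base
  then show ?case
    by (simp add: partial_gram_def partial_net_below has_bochner_integral_iff prob_space)
next
  case (step n)
  have "{k<..Suc n} = insert (Suc n) {k<..n}"
    using step.hyps(1) by auto
  then have "(\<Prod>l\<in>{k<..Suc n}. real (d (Suc l)) * (\<sigma> l)\<^sup>2)
      = real (d (Suc (Suc n))) * (\<sigma> (Suc n))\<^sup>2 * (\<Prod>l\<in>{k<..n}. real (d (Suc l)) * (\<sigma> l)\<^sup>2)"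
    by (simp only: prod.insert finite_greaterThanAtMost) simp
  moreover have "expectation (\<lambda>\<omega>. partial_gram d (W \<omega>) k n u v)
      = (\<Prod>l\<in>{k<..n}. real (d (Suc l)) * (\<sigma> l)\<^sup>2) * (\<Sum>b<d (Suc k). u b * v b)"
    using step by (intro has_bochner_integral_integral_eq) simp
  moreover have "has_bochner_integral P (\<lambda>\<omega>. partial_gram d (W \<omega>) k (Suc n) u v)
      (real (d (Suc (Suc n))) * (\<sigma> (Suc n))\<^sup>2 * expectation (\<lambda>\<omega>. partial_gram d (W \<omega>) k n u v))"
    using step.hyps(1) step.prems by (rule has_bochner_integral_partial_gram_Suc)
  ultimately show ?case
    by (simp only: mult.assoc)
qed

lemma has_bochner_integral_gram_product:
  assumes "k \<in> {1..D}" "i < d (Suc k)" "a < d 1" "b < d 1"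
  shows "has_bochner_integral P
    (\<lambda>\<omega>. partial_gram d (W \<omega>) k D (unit_vec i) (unit_vec i)
       * partial_gram d (W \<omega>) 0 (k - 1) (unit_vec a) (unit_vec b))
    ((\<Prod>l\<in>{k<..D}. real (d (Suc l)) * (\<sigma> l)\<^sup>2)
       * ((\<Prod>l\<in>{0<..k - 1}. real (d (Suc l)) * (\<sigma> l)\<^sup>2) * (if a = b then 1 else 0)))"
proof (rule has_bochner_integral_mult_determined_by_disjoint[OF indep_weights[folded weight_def]])
  show "layer_params {k<..D} \<inter> layer_params {0<..k - 1} = {}"
    "layer_params {k<..D} \<subseteq> param_idx d D" "layer_params {0<..k - 1} \<subseteq> param_idx d D"
    by (auto simp: layer_params_def)
  show "determined_by weight (layer_params {k<..D})
      (\<lambda>\<omega>. partial_gram d (W \<omega>) k D (unit_vec i) (unit_vec i))"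
    "determined_by weight (layer_params {0<..k - 1})
      (\<lambda>\<omega>. partial_gram d (W \<omega>) 0 (k - 1) (unit_vec a) (unit_vec b))"
    using assms(1) by (auto intro: determined_by_partial_gram)
  show "has_bochner_integral P (\<lambda>\<omega>. partial_gram d (W \<omega>) k D (unit_vec i) (unit_vec i))
      (\<Prod>l\<in>{k<..D}. real (d (Suc l)) * (\<sigma> l)\<^sup>2)"
    using has_bochner_integral_partial_gram[of k D "unit_vec i" "unit_vec i"] assms
    by (simp add: sum_unit_vec_mult)
  show "has_bochner_integral P (\<lambda>\<omega>. partial_gram d (W \<omega>) 0 (k - 1) (unit_vec a) (unit_vec b))
      ((\<Prod>l\<in>{0<..k - 1}. real (d (Suc l)) * (\<sigma> l)\<^sup>2) * (if a = b then 1 else 0))"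
  proof -
    have "k - 1 \<le> D"
      using assms(1) by auto
    then show ?thesis
      using assms has_bochner_integral_partial_gram[of 0 "k - 1" "unit_vec a" "unit_vec b"]
      by (simp add: sum_unit_vec_mult split del: if_split)
  qed
qed

lemma expectation_sharpness_layerwise:
  assumes "\<And>a. a < d 1 \<Longrightarrow> (\<lambda>xy. fst xy a) \<in> borel_measurable M"
    and "\<And>a. a < d 1 \<Longrightarrow> integrable M (\<lambda>xy. (fst xy a)\<^sup>2)"
  shows "expectation (\<lambda>\<omega>. sharpness d D M (W \<omega>))
    = (\<Sum>k=1..D. real (d (Suc k)) * ((\<Prod>l\<in>{k<..D}. real (d (Suc l)) * (\<sigma> l)\<^sup>2)
        * (\<Prod>l\<in>{0<..k - 1}. real (d (Suc l)) * (\<sigma> l)\<^sup>2))) * (\<Sum>a<d 1. input_moment M a a)"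
proof -
  define Q where "Q k = (\<Prod>l\<in>{k<..D}. real (d (Suc l)) * (\<sigma> l)\<^sup>2)
      * (\<Prod>l\<in>{0<..k - 1}. real (d (Suc l)) * (\<sigma> l)\<^sup>2)" for k
  have "has_bochner_integral P (\<lambda>\<omega>. \<Sum>k=1..D. \<Sum>i<d (Suc k). \<Sum>a<d 1. \<Sum>b<d 1.
        input_moment M a b * (partial_gram d (W \<omega>) k D (unit_vec i) (unit_vec i)
          * partial_gram d (W \<omega>) 0 (k - 1) (unit_vec a) (unit_vec b)))
      (\<Sum>k=1..D. \<Sum>i<d (Suc k). \<Sum>a<d 1. \<Sum>b<d 1. input_moment M a b * (Q k * (if a = b then 1 else 0)))"
    unfolding Q_def mult.assoc
    by (intro has_bochner_integral_sum has_bochner_integral_mult_right has_bochner_integral_gram_product)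
      auto
  then have integral: "has_bochner_integral P (\<lambda>\<omega>. sharpness d D M (W \<omega>))
      (\<Sum>k=1..D. \<Sum>i<d (Suc k). \<Sum>a<d 1. \<Sum>b<d 1. input_moment M a b * (Q k * (if a = b then 1 else 0)))"
    by (simp only: sharpness_eq_sum_gram[OF assms])
  have delta: "(\<Sum>b<d 1. input_moment M a b * (Q k * (if a = b then 1 else 0)))
      = Q k * input_moment M a a" if "a < d 1" for a k
  proof -
    have "(\<Sum>b<d 1. input_moment M a b * (Q k * (if a = b then 1 else 0)))
        = (\<Sum>b<d 1. if b = a then Q k * input_moment M a a else 0)"
      by (intro sum.cong) auto
    then show ?thesis
      using that by simp
  qed
  have "(\<Sum>k=1..D. \<Sum>i<d (Suc k). \<Sum>a<d 1. \<Sum>b<d 1. input_moment M a b * (Q k * (if a = b then 1 else 0)))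
      = (\<Sum>k=1..D. \<Sum>i<d (Suc k). \<Sum>a<d 1. Q k * input_moment M a a)"
    by (intro sum.cong refl delta) auto
  also have "\<dots> = (\<Sum>k=1..D. real (d (Suc k)) * Q k) * (\<Sum>a<d 1. input_moment M a a)"
    by (simp add: sum_distrib_left sum_distrib_right mult_ac)
  finally show ?thesis
    using has_bochner_integral_integral_eq[OF integral] by (simp add: Q_def)
qed


lemma expectation_sharpness:
  assumes "\<And>a. a < d 1 \<Longrightarrow> (\<lambda>xy. fst xy a) \<in> borel_measurable M"
    and "\<And>a. a < d 1 \<Longrightarrow> integrable M (\<lambda>xy. (fst xy a)\<^sup>2)"
  shows "expectation (\<lambda>\<omega>. sharpness d D M (W \<omega>))
      = real (d (Suc D)) * (\<Prod>k=2..D. real (d k)) * (\<Sum>i<d 1. \<integral>xy. (fst xy i)\<^sup>2 \<partial>M)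
        * (\<Sum>k=1..D. \<Prod>j\<in>{1..D} - {k}. (\<sigma> j)\<^sup>2)"
proof -
  have "expectation (\<lambda>\<omega>. sharpness d D M (W \<omega>))
      = (\<Sum>k=1..D. real (d (Suc k)) * ((\<Prod>l\<in>{k<..D}. real (d (Suc l)) * (\<sigma> l)\<^sup>2)
          * (\<Prod>l\<in>{0<..k - 1}. real (d (Suc l)) * (\<sigma> l)\<^sup>2))) * (\<Sum>a<d 1. input_moment M a a)"
    using assms by (rule expectation_sharpness_layerwise)
  also have "\<dots> = (\<Sum>k=1..D. real (d (Suc D)) * (\<Prod>k=2..D. real (d k)) * (\<Prod>j\<in>{1..D} - {k}. (\<sigma> j)\<^sup>2))
      * (\<Sum>a<d 1. input_moment M a a)"
    by (intro arg_cong2[where f = "(*)"] sum.cong refl dim_mult_prod_layer_factors) simp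
  also have "(\<Sum>a<d 1. input_moment M a a) = (\<Sum>i<d 1. \<integral>xy. (fst xy i)\<^sup>2 \<partial>M)"
    by (simp add: input_moment_def power2_eq_square)
  finally show "expectation (\<lambda>\<omega>. sharpness d D M (W \<omega>))
      = real (d (Suc D)) * (\<Prod>k=2..D. real (d k)) * (\<Sum>i<d 1. \<integral>xy. (fst xy i)\<^sup>2 \<partial>M)
        * (\<Sum>k=1..D. \<Prod>j\<in>{1..D} - {k}. (\<sigma> j)\<^sup>2)"
    by (simp add: sum_distrib_left[symmetric] mult_ac)
qed

end

theorem proposition1:
  fixes P :: "'w measure"
    and W :: "'w \<Rightarrow> nat \<Rightarrow> nat \<Rightarrow> nat \<Rightarrow> real"
    and M :: "((nat \<Rightarrow> real) \<times> (nat \<Rightarrow> real)) measure"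
    and d :: "nat \<Rightarrow> nat" and D :: nat and \<sigma> :: "nat \<Rightarrow> real"
  assumes "D \<ge> 1"
    and "prob_space M"
    and "\<And>i. i < d 1 \<Longrightarrow> (\<lambda>xy. fst xy i) \<in> borel_measurable M"
    and "\<And>i. i < d 1 \<Longrightarrow> integrable M (\<lambda>xy. (fst xy i)\<^sup>2)"
    and "prob_space P"
    and "\<And>k. k \<in> {1..D} \<Longrightarrow> \<sigma> k > 0"
    and "prob_space.indep_vars P (\<lambda>_. borel) (\<lambda>(k, i, j) \<omega>. W \<omega> k i j) (param_idx d D)"
    and "\<And>k i j. (k, i, j) \<in> param_idx d D \<Longrightarrow>
           distributed P lborel (\<lambda>\<omega>. W \<omega> k i j) (\<lambda>v. ennreal (normal_density 0 (\<sigma> k) v))"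
  shows "(\<integral>\<omega>. sharpness d D M (W \<omega>) \<partial>P)
           = real (d (Suc D)) * (\<Prod>k=2..D. real (d k)) * (\<Sum>i<d 1. \<integral>xy. (fst xy i)\<^sup>2 \<partial>M)
             * (\<Sum>k=1..D. \<Prod>j\<in>{1..D} - {k}. (\<sigma> j)\<^sup>2)
      \<and> (\<forall>s dd. (\<forall>k\<in>{1..D}. \<sigma> k = s) \<and> (\<forall>k\<in>{2..D}. d k = dd) \<longrightarrow>
           (\<integral>\<omega>. sharpness d D M (W \<omega>) \<partial>P)
             = real D * real (d (Suc D)) * (\<Sum>i<d 1. \<integral>xy. (fst xy i)\<^sup>2 \<partial>M)
               * (real dd * s\<^sup>2) ^ (D - 1))"
proof -
  interpret gaussian_weights P W d D \<sigma>
    by (intro gaussian_weights.intro gaussian_weights_axioms.intro assms(5-8))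
  have general: "(\<integral>\<omega>. sharpness d D M (W \<omega>) \<partial>P)
      = real (d (Suc D)) * (\<Prod>k=2..D. real (d k)) * (\<Sum>i<d 1. \<integral>xy. (fst xy i)\<^sup>2 \<partial>M)
        * (\<Sum>k=1..D. \<Prod>j\<in>{1..D} - {k}. (\<sigma> j)\<^sup>2)"
    using assms(3,4) by (rule expectation_sharpness)
  have "(\<Prod>k=2..D. real (d k)) = real dd ^ (D - 1)" if "\<forall>k\<in>{2..D}. d k = dd" for dd
  proof -
    have "(\<Prod>k=2..D. real (d k)) = (\<Prod>k=2..D. real dd)"
      using that by (intro prod.cong) auto
    then show ?thesis
      by simp
  qed
  with general show ?thesis
    by (simp add: sum_prod_remove_const power_mult_distrib mult_ac)
qed

end
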